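(* Let $V$ be a finite-dimensional $G$-module for an algebraic group $G$. (1) For every closed subgroup $H\subset G$ the fixed point set $V^H$ is $G$-symmetric. (2) For all $v\in V$ we have $M(v)=\operatorname{End}_G(V)(v)\subset V^{G_v}$.
   Context: $\Bbbk$ is algebraically closed of characteristic $0$. Vector fields on $V$ are polynomial maps $\xi\colon V\to V$; $\xi$ is $G$-invariant if $\xi(gv)=g\xi(v)$. A closed subvariety $X\subset V$ is $G$-symmetric if $\xi(x)\in T_xX$ for all $x\in X$ and all $G$-invariant vector fields $\xi$. $M(v)$ is the smallest closed $G$-symmetric subvariety containing $v$. $\operatorname{End}_G(V)$ is the set of $G$-equivariant polynomial maps $V\to V$ and $\operatorname{End}_G(V)(v)=\{\phi(v)\mid\phi\in\operatorname{End}_G(V)\}$. $G_v$ is the stabilizer of $v$. *)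

theory Defs
  imports "HOL-Analysis.Analysis" "HOL-Computational_Algebra.Polynomial"
begin

definition alg_closed_field :: "'k::field itself \<Rightarrow> bool" where
  "alg_closed_field _ \<longleftrightarrow> (\<forall>p::'k poly. degree p > 0 \<longrightarrow> (\<exists>x. poly p x = 0))"

inductive_set polys :: "('v \<Rightarrow> 'k::comm_ring_1) set \<Rightarrow> ('v \<Rightarrow> 'k) set"
  for C :: "('v \<Rightarrow> 'k) set" where
  coord: "f \<in> C \<Longrightarrow> f \<in> polys C"
| const: "(\<lambda>_. c) \<in> polys C"
| add: "f \<in> polys C \<Longrightarrow> g \<in> polys C \<Longrightarrow> (\<lambda>x. f x + g x) \<in> polys C"
| mult: "f \<in> polys C \<Longrightarrow> g \<in> polys C \<Longrightarrow> (\<lambda>x. f x * g x) \<in> polys C"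

definition vpolys :: "('k::comm_ring_1 ^ 'n \<Rightarrow> 'k) set" where
  "vpolys = polys {(\<lambda>x. x $ i) | i. True}"

definition mpolys :: "('k::comm_ring_1 ^ 'm ^ 'm \<Rightarrow> 'k) set" where
  "mpolys = polys {(\<lambda>A. A $ i $ j) | i j. True}"

definition poly_map :: "('k::comm_ring_1 ^ 'n \<Rightarrow> 'k ^ 'n) \<Rightarrow> bool" where
  "poly_map \<xi> \<longleftrightarrow> (\<forall>i. (\<lambda>x. \<xi> x $ i) \<in> vpolys)"

definition zariski_closed_GL :: "('k::field ^ 'm ^ 'm) set \<Rightarrow> bool" where
  "zariski_closed_GL S \<longleftrightarrow>
     (\<exists>F \<subseteq> mpolys. S = {g. det g \<noteq> 0 \<and> (\<forall>f\<in>F. f g = 0)})"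

definition matrix_subgroup :: "('k::field ^ 'm ^ 'm) set \<Rightarrow> bool" where
  "matrix_subgroup G \<longleftrightarrow> mat 1 \<in> G \<and> (\<forall>g\<in>G. det g \<noteq> 0) \<and>
     (\<forall>g\<in>G. \<forall>h\<in>G. g ** h \<in> G) \<and> (\<forall>g\<in>G. \<exists>h\<in>G. g ** h = mat 1)"

definition lin_alg_group :: "('k::field ^ 'm ^ 'm) set \<Rightarrow> bool" where
  "lin_alg_group G \<longleftrightarrow> matrix_subgroup G \<and> zariski_closed_GL G"

definition closed_subgroup :: "('k::field ^ 'm ^ 'm) set \<Rightarrow> ('k ^ 'm ^ 'm) set \<Rightarrow> bool" where
  "closed_subgroup G H \<longleftrightarrow> H \<subseteq> G \<and> matrix_subgroup H \<and> zariski_closed_GL H"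

text \<open>A finite dimensional rational G-module V = k^n: a morphism of algebraic groups
  rho : G \<rightarrow> GL(V), i.e. a homomorphism whose matrix entries are regular functions
  on G (polynomials in the entries and 1/det).\<close>
definition rational_rep ::
  "('k::field ^ 'm ^ 'm) set \<Rightarrow> ('k ^ 'm ^ 'm \<Rightarrow> 'k ^ 'n ^ 'n) \<Rightarrow> bool" where
  "rational_rep G \<rho> \<longleftrightarrow>
     (\<forall>g\<in>G. det (\<rho> g) \<noteq> 0) \<and>
     (\<forall>g\<in>G. \<forall>h\<in>G. \<rho> (g ** h) = \<rho> g ** \<rho> h) \<and>
     (\<forall>i j. \<exists>p\<in>mpolys. \<exists>N::nat. \<forall>g\<in>G. \<rho> g $ i $ j = p g / det g ^ N)"

definition closed_subvariety :: "('k::field ^ 'n) set \<Rightarrow> bool" where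
  "closed_subvariety X \<longleftrightarrow> (\<exists>F \<subseteq> vpolys. X = {v. \<forall>f\<in>F. f v = 0})"

text \<open>Differential of a polynomial function f at x applied to w:
  the linear coefficient of the univariate polynomial t \<mapsto> f (x + t w).\<close>
definition dderiv :: "('k::field ^ 'n \<Rightarrow> 'k) \<Rightarrow> 'k ^ 'n \<Rightarrow> 'k ^ 'n \<Rightarrow> 'k" where
  "dderiv f x w = coeff (THE p. \<forall>t. poly p t = f (x + t *s w)) 1"

definition tangent_space :: "('k::field ^ 'n) set \<Rightarrow> 'k ^ 'n \<Rightarrow> ('k ^ 'n) set" where
  "tangent_space X x =
     {w. \<forall>f\<in>vpolys. (\<forall>y\<in>X. f y = 0) \<longrightarrow> dderiv f x w = 0}"

text \<open>G-equivariant polynomial maps V \<rightarrow> V; these are both End_G(V) and the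
  G-invariant vector fields.\<close>
definition equivariant_poly_map ::
  "('k::field ^ 'm ^ 'm) set \<Rightarrow> ('k ^ 'm ^ 'm \<Rightarrow> 'k ^ 'n ^ 'n) \<Rightarrow> ('k ^ 'n \<Rightarrow> 'k ^ 'n) \<Rightarrow> bool" where
  "equivariant_poly_map G \<rho> \<xi> \<longleftrightarrow>
     poly_map \<xi> \<and> (\<forall>g\<in>G. \<forall>v. \<xi> (\<rho> g *v v) = \<rho> g *v \<xi> v)"

definition G_symmetric ::
  "('k::field ^ 'm ^ 'm) set \<Rightarrow> ('k ^ 'm ^ 'm \<Rightarrow> 'k ^ 'n ^ 'n) \<Rightarrow> ('k ^ 'n) set \<Rightarrow> bool" where
  "G_symmetric G \<rho> X \<longleftrightarrow> closed_subvariety X \<and>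
     (\<forall>\<xi>. equivariant_poly_map G \<rho> \<xi> \<longrightarrow> (\<forall>x\<in>X. \<xi> x \<in> tangent_space X x))"

definition Msym ::
  "('k::field ^ 'm ^ 'm) set \<Rightarrow> ('k ^ 'm ^ 'm \<Rightarrow> 'k ^ 'n ^ 'n) \<Rightarrow> 'k ^ 'n \<Rightarrow> ('k ^ 'n) set" where
  "Msym G \<rho> v = \<Inter>{X. G_symmetric G \<rho> X \<and> v \<in> X}"

definition EndG_orbit ::
  "('k::field ^ 'm ^ 'm) set \<Rightarrow> ('k ^ 'm ^ 'm \<Rightarrow> 'k ^ 'n ^ 'n) \<Rightarrow> 'k ^ 'n \<Rightarrow> ('k ^ 'n) set" where
  "EndG_orbit G \<rho> v = {\<phi> v | \<phi>. equivariant_poly_map G \<rho> \<phi>}"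

definition fixed_points ::
  "('k::field ^ 'm ^ 'm \<Rightarrow> 'k ^ 'n ^ 'n) \<Rightarrow> ('k ^ 'm ^ 'm) set \<Rightarrow> ('k ^ 'n) set" where
  "fixed_points \<rho> H = {v. \<forall>h\<in>H. \<rho> h *v v = v}"

definition stabilizer ::
  "('k::field ^ 'm ^ 'm) set \<Rightarrow> ('k ^ 'm ^ 'm \<Rightarrow> 'k ^ 'n ^ 'n) \<Rightarrow> 'k ^ 'n \<Rightarrow> ('k ^ 'm ^ 'm) set" where
  "stabilizer G \<rho> v = {g\<in>G. \<rho> g *v v = v}"

end

theory Submission
  imports Defs "HOL-Library.Function_Algebras"
begin

text \<open>
  Fixed point sets and the sets \<open>End\<^sub>G(V)(v)\<close> are linear subspaces stable under
  equivariant maps; a subspace is Zariski closed and is its own tangent space at each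
  of its points, which gives (1), \<open>M(v) \<subseteq> End\<^sub>G(V)(v)\<close> and \<open>End\<^sub>G(V)(v) \<subseteq> V\<^bsup>G\<^sub>v\<^esup>\<close>.

  The substance is that a \<open>G\<close>-symmetric \<open>X \<ni> v\<close> contains \<open>\<phi>(v)\<close> for every equivariant
  \<open>\<phi>\<close>. Consider families \<open>\<Phi>\<^sub>t = \<Sum>\<^sub>j\<^sub>\<le>\<^sub>N t\<^sup>j \<psi>\<^sub>j\<close> of equivariant maps with \<open>\<psi>\<^sub>0 = id\<close> and a
  polynomial \<open>f\<close> vanishing on \<open>X\<close>, and let \<open>h\<^sub>k\<close> be the \<open>t\<^sup>k\<close>-coefficient of \<open>f(\<Phi>\<^sub>t x)\<close>.
  By induction on \<open>k\<close>, simultaneously for all families, \<open>h\<^sub>k\<close> vanishes on \<open>X\<close>: then so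
  does its derivative along the tangent field \<open>\<psi>\<^sub>1\<close>, which is the \<open>t\<^sup>k\<close>-coefficient of
  \<open>df(d\<Phi>\<^sub>t \<psi>\<^sub>1)\<close>, while \<open>(k+1) h\<^sub>k\<^sub>+\<^sub>1\<close> is that of \<open>df(\<partial>\<^sub>t\<Phi>\<^sub>t)\<close>. The difference is the
  \<open>\<mu>\<close>-derivative at \<open>0\<close> of \<open>f\<close> along the perturbed family \<open>\<Phi>\<^sub>t + \<mu>(d\<Phi>\<^sub>t \<psi>\<^sub>1 - \<partial>\<^sub>t\<Phi>\<^sub>t)\<close>, which
  again starts with the identity (as \<open>d(id) \<psi>\<^sub>1 = \<psi>\<^sub>1\<close>), so it vanishes by induction.
  Characteristic \<open>0\<close> lets us divide by \<open>k+1\<close>. For \<open>\<Phi>\<^sub>t = id + t(\<phi> - id)\<close> and \<open>t = 1\<close>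
  this gives \<open>f(\<phi> v) = 0\<close>.

  All derivatives are formal: expressions polynomial in two auxiliary parameters
  \<open>s\<close>, \<open>t\<close> and in \<open>x \<in> V\<close> are bivariate polynomials whose coefficients are
  polynomial functions on \<open>V\<close>, and identities between them are checked on values.
\<close>

lemma vpolys_coord: "(\<lambda>x::'k::comm_ring_1^'n. x $ i) \<in> vpolys"
  unfolding vpolys_def by (rule polys.coord) auto

lemma vpolys_const: "(\<lambda>x::'k::comm_ring_1^'n. c) \<in> vpolys"
  unfolding vpolys_def by (rule polys.const)

lemma vpolys_add: "f \<in> vpolys \<Longrightarrow> g \<in> vpolys \<Longrightarrow> (\<lambda>x. f x + g x) \<in> vpolys"
  unfolding vpolys_def by (rule polys.add)

lemma vpolys_mult: "f \<in> vpolys \<Longrightarrow> g \<in> vpolys \<Longrightarrow> (\<lambda>x. f x * g x) \<in> vpolys"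
  unfolding vpolys_def by (rule polys.mult)

lemma vpolys_scale: "f \<in> vpolys \<Longrightarrow> (\<lambda>x. c * f x) \<in> vpolys"
  using vpolys_mult[OF vpolys_const] by blast

lemma vpolys_diff:
  "(f :: 'k::comm_ring_1^'n \<Rightarrow> 'k) \<in> vpolys \<Longrightarrow> g \<in> vpolys \<Longrightarrow> (\<lambda>x. f x - g x) \<in> vpolys"
  using vpolys_add[OF _ vpolys_scale[of g "-1"], of f] by simp

lemma vpolys_sum: "(\<And>a. a \<in> A \<Longrightarrow> f a \<in> vpolys) \<Longrightarrow> (\<lambda>x. \<Sum>a\<in>A. f a x) \<in> vpolys"
  by (induction A rule: infinite_finite_induct) (simp_all add: vpolys_const vpolys_add)

lemma vpolys_linear_form: "(\<lambda>x::'k::comm_ring_1^'n. \<Sum>j\<in>UNIV. c j * x $ j) \<in> vpolys"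
  by (rule vpolys_sum) (rule vpolys_scale[OF vpolys_coord])

lemma vpolys_induct [consumes 1, case_names coord const add mult]:
  assumes "f \<in> vpolys"
    and "\<And>i. P (\<lambda>x. x $ i)"
    and "\<And>c. P (\<lambda>_. c)"
    and "\<And>f g. f \<in> vpolys \<Longrightarrow> g \<in> vpolys \<Longrightarrow> P f \<Longrightarrow> P g \<Longrightarrow> P (\<lambda>x. f x + g x)"
    and "\<And>f g. f \<in> vpolys \<Longrightarrow> g \<in> vpolys \<Longrightarrow> P f \<Longrightarrow> P g \<Longrightarrow> P (\<lambda>x. f x * g x)"
  shows "P f"
  using assms(1) unfolding vpolys_def
  by (induction rule: polys.induct) (use assms(2-5) in \<open>auto simp: vpolys_def\<close>)

lemma vpolys_comp: "f \<in> vpolys \<Longrightarrow> poly_map \<phi> \<Longrightarrow> (\<lambda>y. f (\<phi> y)) \<in> vpolys"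
  by (induction rule: vpolys_induct) (auto simp: poly_map_def intro: vpolys_const vpolys_add vpolys_mult)

lemma vpolys_restrict_line: "f \<in> vpolys \<Longrightarrow> \<exists>p. \<forall>t. poly p t = f (x + t *s w)"
proof (induction rule: vpolys_induct)
  case (coord i)
  show ?case by (rule exI[of _ "[:x$i, w$i:]"]) (simp add: algebra_simps)
next
  case (const c)
  show ?case by (rule exI[of _ "[:c:]"]) simp
next
  case (add f g)
  then obtain p q where "\<forall>t. poly p t = f (x + t *s w)" "\<forall>t. poly q t = g (x + t *s w)" by blast
  then show ?case by (intro exI[of _ "p + q"]) simp
next
  case (mult f g)
  then obtain p q where "\<forall>t. poly p t = f (x + t *s w)" "\<forall>t. poly q t = g (x + t *s w)" by blast
  then show ?case by (intro exI[of _ "p * q"]) simp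
qed

lemma dderiv_eq_coeff:
  fixes f :: "'k::field_char_0^'n \<Rightarrow> 'k"
  assumes "\<forall>t. poly p t = f (x + t *s w)"
  shows "dderiv f x w = coeff p 1"
proof -
  have "(THE p. \<forall>t. poly p t = f (x + t *s w)) = p"
    by (rule the_equality) (use assms in \<open>auto intro: poly_ext\<close>)
  then show ?thesis unfolding dderiv_def by simp
qed

definition ring_closed :: "'a::comm_ring_1 set \<Rightarrow> bool" where
  "ring_closed S \<longleftrightarrow> 0 \<in> S \<and> 1 \<in> S \<and> (\<forall>a\<in>S. \<forall>b\<in>S. a + b \<in> S \<and> a * b \<in> S)"

definition poly_over :: "'a::comm_ring_1 set \<Rightarrow> 'a poly set" where
  "poly_over S = {p. \<forall>i. coeff p i \<in> S}"

lemma ring_closedD: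
  "ring_closed S \<Longrightarrow> 0 \<in> S" "ring_closed S \<Longrightarrow> 1 \<in> S"
  "ring_closed S \<Longrightarrow> a \<in> S \<Longrightarrow> b \<in> S \<Longrightarrow> a + b \<in> S"
  "ring_closed S \<Longrightarrow> a \<in> S \<Longrightarrow> b \<in> S \<Longrightarrow> a * b \<in> S"
  by (auto simp: ring_closed_def)

lemma ring_closed_sum: "ring_closed S \<Longrightarrow> (\<And>a. a \<in> A \<Longrightarrow> f a \<in> S) \<Longrightarrow> sum f A \<in> S"
  by (induction A rule: infinite_finite_induct) (auto simp: ring_closed_def)

lemma ring_closed_poly_over: "ring_closed S \<Longrightarrow> ring_closed (poly_over S)"
  unfolding ring_closed_def poly_over_def
  by (auto simp: coeff_1 coeff_mult intro!: ring_closed_sum[unfolded ring_closed_def])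

lemma poly_over_const: "ring_closed S \<Longrightarrow> c \<in> S \<Longrightarrow> [:c:] \<in> poly_over S"
  by (auto simp: poly_over_def ring_closed_def coeff_pCons split: nat.splits)

lemma poly_over_pCons: "ring_closed S \<Longrightarrow> c \<in> S \<Longrightarrow> p \<in> poly_over S \<Longrightarrow> pCons c p \<in> poly_over S"
  by (auto simp: poly_over_def coeff_pCons split: nat.splits)

lemma poly_over_poly:
  assumes "ring_closed S" "p \<in> poly_over (poly_over S)" "y \<in> poly_over S"
  shows "poly p y \<in> poly_over S"
  using assms(2)
proof (induction p)
  case 0
  then show ?case using ring_closedD(1)[OF ring_closed_poly_over[OF assms(1)]] by simp
next
  case (pCons a p)
  then have "a \<in> poly_over S" "p \<in> poly_over (poly_over S)"
    unfolding poly_over_def[of "poly_over S"] by (auto dest: spec[of _ 0] spec[of _ "Suc _"])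
  then show ?case using pCons.IH assms(3) ring_closedD(3,4)[OF ring_closed_poly_over[OF assms(1)]] by simp
qed

lemma ring_closed_vpolys: "ring_closed (vpolys :: ('k::comm_ring_1^'n \<Rightarrow> 'k) set)"
  unfolding ring_closed_def zero_fun_def one_fun_def plus_fun_def times_fun_def
  by (auto intro: vpolys_const vpolys_add vpolys_mult)

section \<open>Bivariate polynomials over polynomial functions\<close>

text \<open>
  A value \<open>P :: ('k,'n) vfun poly poly\<close> represents the function
  \<open>(x, s, t) \<mapsto> eval2 x s t P\<close>: the outer variable is \<open>s\<close>, the inner one \<open>t\<close>.
\<close>

type_synonym ('k, 'n) vfun = "'k^'n \<Rightarrow> 'k"

definition eval_coeffs :: "'k::comm_ring_1^'n \<Rightarrow> ('k,'n) vfun poly \<Rightarrow> 'k poly" where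
  "eval_coeffs x p = map_poly (\<lambda>c. c x) p"

definition eval_coeffs2 :: "'k::comm_ring_1^'n \<Rightarrow> ('k,'n) vfun poly poly \<Rightarrow> 'k poly poly" where
  "eval_coeffs2 x P = map_poly (eval_coeffs x) P"

definition eval2 :: "'k::comm_ring_1^'n \<Rightarrow> 'k \<Rightarrow> 'k \<Rightarrow> ('k,'n) vfun poly poly \<Rightarrow> 'k" where
  "eval2 x s t P = poly (poly (eval_coeffs2 x P) [:s:]) t"

lemma map_poly_add_hom:
  assumes "f 0 = 0" "\<And>a b. f (a + b) = f a + f b"
  shows "map_poly f (p + q) = map_poly f p + map_poly f q"
  by (intro poly_eqI) (simp add: coeff_map_poly assms)

lemma additive_sum:
  assumes "f 0 = 0" "\<And>a b. f (a + b) = f a + f b"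
  shows "f (sum g A) = (\<Sum>a\<in>A. f (g a))"
  by (induction A rule: infinite_finite_induct) (simp_all add: assms)

lemma map_poly_mult_hom:
  assumes "f 0 = 0" "\<And>a b. f (a + b) = f a + f b" "\<And>a b. f (a * b) = f a * f b"
  shows "map_poly f (p * q) = map_poly f p * map_poly f q"
  by (intro poly_eqI) (simp add: coeff_map_poly assms coeff_mult additive_sum[of f, OF assms(1,2)])

lemma eval_coeffs_0 [simp]: "eval_coeffs x 0 = 0"
  by (simp add: eval_coeffs_def)

lemma eval_coeffs_add [simp]: "eval_coeffs x (p + q) = eval_coeffs x p + eval_coeffs x q"
  unfolding eval_coeffs_def by (rule map_poly_add_hom) auto

lemma eval_coeffs_mult [simp]: "eval_coeffs x (p * q) = eval_coeffs x p * eval_coeffs x q"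
  unfolding eval_coeffs_def by (rule map_poly_mult_hom) auto

lemma eval_coeffs_1 [simp]: "eval_coeffs x 1 = 1"
  by (simp add: eval_coeffs_def)

lemma eval_coeffs_pCons [simp]: "eval_coeffs x (pCons c p) = pCons (c x) (eval_coeffs x p)"
  unfolding eval_coeffs_def by (rule map_poly_pCons) simp

lemma eval_coeffs_monom [simp]: "eval_coeffs x (monom c j) = monom (c x) j"
  unfolding eval_coeffs_def by (rule map_poly_monom) simp

lemma eval_coeffs_sum [simp]: "eval_coeffs x (sum g A) = (\<Sum>a\<in>A. eval_coeffs x (g a))"
  by (rule additive_sum) auto

lemma eval_coeffs_smult [simp]: "eval_coeffs x (smult c p) = smult (c x) (eval_coeffs x p)"
  unfolding eval_coeffs_def by (intro poly_eqI) (simp add: coeff_map_poly)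

lemma coeff_eval_coeffs [simp]: "coeff (eval_coeffs x p) k = coeff p k x"
  unfolding eval_coeffs_def by (simp add: coeff_map_poly)

lemma eval_coeffs2_0 [simp]: "eval_coeffs2 x 0 = 0"
  by (simp add: eval_coeffs2_def)

lemma eval_coeffs2_add [simp]: "eval_coeffs2 x (p + q) = eval_coeffs2 x p + eval_coeffs2 x q"
  unfolding eval_coeffs2_def by (rule map_poly_add_hom) auto

lemma eval_coeffs2_mult [simp]: "eval_coeffs2 x (p * q) = eval_coeffs2 x p * eval_coeffs2 x q"
  unfolding eval_coeffs2_def by (rule map_poly_mult_hom) auto

lemma eval_coeffs2_pCons [simp]: "eval_coeffs2 x (pCons c p) = pCons (eval_coeffs x c) (eval_coeffs2 x p)"
  unfolding eval_coeffs2_def by (rule map_poly_pCons) simp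

lemma coeff_eval_coeffs2 [simp]: "coeff (eval_coeffs2 x p) k = eval_coeffs x (coeff p k)"
  unfolding eval_coeffs2_def by (simp add: coeff_map_poly)

lemma eval2_add [simp]: "eval2 x s t (P + Q) = eval2 x s t P + eval2 x s t Q"
  by (simp add: eval2_def)

lemma eval2_mult [simp]: "eval2 x s t (P * Q) = eval2 x s t P * eval2 x s t Q"
  by (simp add: eval2_def)

lemma eval2_sum [simp]: "eval2 x s t (sum g A) = (\<Sum>a\<in>A. eval2 x s t (g a))"
  by (rule additive_sum) (auto simp: eval2_def)

lemma eval2_const [simp]: "eval2 x s t [:[:c:]:] = c x"
  by (simp add: eval2_def)

lemma eval2_pCons: "eval2 x s t (pCons a P) = poly (eval_coeffs x a) t + s * eval2 x s t P"
  by (simp add: eval2_def)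

lemma poly_poly_const: "poly (poly A [:s:]) t = poly (map_poly (\<lambda>q. poly q t) A) s"
  by (induction A) (simp_all add: map_poly_pCons)

lemma coeff_poly_const: "coeff (poly A [:s:]) k = poly (map_poly (\<lambda>q. coeff q k) A) s"
  by (induction A) (simp_all add: map_poly_pCons)

lemma eval2_as_poly_in_s: "eval2 x s t P = poly (map_poly (\<lambda>q. poly (eval_coeffs x q) t) P) s"
  unfolding eval2_def eval_coeffs2_def poly_poly_const
  by (simp add: map_poly_map_poly o_def)

lemma eval2_0: "eval2 x 0 t P = poly (eval_coeffs x (coeff P 0)) t"
  unfolding eval2_as_poly_in_s by (simp add: poly_0_coeff_0 coeff_map_poly)

lemma poly2_ext:
  fixes A B :: "'k::field_char_0 poly poly"
  assumes "\<And>s t. poly (poly A [:s:]) t = poly (poly B [:s:]) t"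
  shows "A = B"
proof -
  have "map_poly (\<lambda>q. coeff q k) A = map_poly (\<lambda>q. coeff q k) B" for k
  proof (rule poly_ext)
    fix s
    have "poly A [:s:] = poly B [:s:]" using assms by (intro poly_ext)
    then show "poly (map_poly (\<lambda>q. coeff q k) A) s = poly (map_poly (\<lambda>q. coeff q k) B) s"
      by (metis coeff_poly_const)
  qed
  then have "coeff (coeff A a) k = coeff (coeff B a) k" for a k
    by (metis coeff_map_poly coeff_0)
  then show ?thesis by (simp add: poly_eq_iff)
qed

lemma eval2_inject:
  fixes P Q :: "('k::field_char_0,'n::finite) vfun poly poly"
  assumes "\<And>x s t. eval2 x s t P = eval2 x s t Q"
  shows "P = Q"
proof -
  have "eval_coeffs2 x P = eval_coeffs2 x Q" for x
    using assms unfolding eval2_def by (intro poly2_ext)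
  then have "coeff (coeff P a) b x = coeff (coeff Q a) b x" for a b x
    by (metis coeff_eval_coeffs coeff_eval_coeffs2)
  then show ?thesis by (simp add: poly_eq_iff fun_eq_iff)
qed

lemma eval_coeffs_inject:
  fixes p q :: "('k::field_char_0,'n::finite) vfun poly"
  assumes "\<And>x t. poly (eval_coeffs x p) t = poly (eval_coeffs x q) t"
  shows "p = q"
proof -
  have "eval_coeffs x p = eval_coeffs x q" for x using assms by (intro poly_ext)
  then have "coeff p b x = coeff q b x" for b x by (metis coeff_eval_coeffs)
  then show ?thesis by (simp add: poly_eq_iff fun_eq_iff)
qed

definition vpoly :: "('k::comm_ring_1,'n::finite) vfun poly \<Rightarrow> bool" where
  "vpoly p \<longleftrightarrow> p \<in> poly_over vpolys"

definition vpoly2 :: "('k::comm_ring_1,'n::finite) vfun poly poly \<Rightarrow> bool" where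
  "vpoly2 P \<longleftrightarrow> P \<in> poly_over (poly_over vpolys)"

lemma ring_closed_vpoly: "ring_closed {p :: ('k::comm_ring_1,'n::finite) vfun poly. vpoly p}"
  unfolding vpoly_def using ring_closed_poly_over[OF ring_closed_vpolys] by simp

lemma ring_closed_vpoly2: "ring_closed {P :: ('k::comm_ring_1,'n::finite) vfun poly poly. vpoly2 P}"
  unfolding vpoly2_def using ring_closed_poly_over[OF ring_closed_poly_over[OF ring_closed_vpolys]]
  by simp

lemma vpoly_iff_coeff: "vpoly p \<longleftrightarrow> (\<forall>i. coeff p i \<in> vpolys)"
  by (simp add: vpoly_def poly_over_def)

lemma vpoly2_iff_coeff: "vpoly2 P \<longleftrightarrow> (\<forall>a b. coeff (coeff P a) b \<in> vpolys)"
  by (simp add: vpoly2_def poly_over_def)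

lemma vpoly_const: "f \<in> vpolys \<Longrightarrow> vpoly [:f:]"
  by (simp add: vpoly_def poly_over_const ring_closed_vpolys)

lemma vpoly2_add: "vpoly2 P \<Longrightarrow> vpoly2 Q \<Longrightarrow> vpoly2 (P + Q)"
  using ring_closedD(3)[OF ring_closed_vpoly2] by simp

lemma vpoly2_mult: "vpoly2 P \<Longrightarrow> vpoly2 Q \<Longrightarrow> vpoly2 (P * Q)"
  using ring_closedD(4)[OF ring_closed_vpoly2] by simp

lemma vpoly2_sum: "(\<And>a. a \<in> A \<Longrightarrow> vpoly2 (g a)) \<Longrightarrow> vpoly2 (sum g A)"
  using ring_closed_sum[OF ring_closed_vpoly2, of A g] by simp

lemma vpoly2_const: "vpoly2 [:[:(\<lambda>_. c):]:]"
  by (auto simp: vpoly2_iff_coeff coeff_pCons vpolys_const ring_closedD(1)[OF ring_closed_vpolys]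
      split: nat.splits)

definition subst2 ::
  "('k::field_char_0^'n::finite \<Rightarrow> 'k) \<Rightarrow> (('k,'n) vfun poly poly)^'n \<Rightarrow> ('k,'n) vfun poly poly" where
  "subst2 f Y = (THE P. \<forall>x s t. eval2 x s t P = f (\<chi> i. eval2 x s t (Y$i)))"

lemma subst2_eqI:
  assumes "\<And>x s t. eval2 x s t P = f (\<chi> i. eval2 x s t (Y$i))"
  shows "subst2 f Y = P"
  unfolding subst2_def
  by (rule the_equality) (use assms in \<open>auto intro: eval2_inject\<close>)

lemma subst2_exists:
  fixes f :: "'k::field_char_0^'n::finite \<Rightarrow> 'k"
  assumes "f \<in> vpolys" "\<And>i. vpoly2 (Y$i)"
  shows "\<exists>P. vpoly2 P \<and> (\<forall>x s t. eval2 x s t P = f (\<chi> i. eval2 x s t (Y$i)))"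
  using assms(1)
proof (induction rule: vpolys_induct)
  case (coord i)
  show ?case by (rule exI[of _ "Y$i"]) (simp add: assms(2))
next
  case (const c)
  show ?case by (rule exI[of _ "[:[:(\<lambda>_. c):]:]"]) (simp add: vpoly2_const)
next
  case (add f g)
  then obtain P Q where "vpoly2 P" "\<forall>x s t. eval2 x s t P = f (\<chi> i. eval2 x s t (Y$i))"
    "vpoly2 Q" "\<forall>x s t. eval2 x s t Q = g (\<chi> i. eval2 x s t (Y$i))" by blast
  then show ?case by (intro exI[of _ "P + Q"]) (simp add: vpoly2_add)
next
  case (mult f g)
  then obtain P Q where "vpoly2 P" "\<forall>x s t. eval2 x s t P = f (\<chi> i. eval2 x s t (Y$i))"
    "vpoly2 Q" "\<forall>x s t. eval2 x s t Q = g (\<chi> i. eval2 x s t (Y$i))" by blast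
  then show ?case by (intro exI[of _ "P * Q"]) (simp add: vpoly2_mult)
qed

lemma
  fixes f :: "'k::field_char_0^'n::finite \<Rightarrow> 'k"
  assumes "f \<in> vpolys" "\<And>i. vpoly2 (Y$i)"
  shows vpoly2_subst2: "vpoly2 (subst2 f Y)"
    and eval2_subst2: "eval2 x s t (subst2 f Y) = f (\<chi> i. eval2 x s t (Y$i))"
proof -
  obtain P where P: "vpoly2 P" "\<forall>x s t. eval2 x s t P = f (\<chi> i. eval2 x s t (Y$i))"
    using subst2_exists[OF assms] by blast
  then have "subst2 f Y = P" by (intro subst2_eqI) auto
  then show "vpoly2 (subst2 f Y)" "eval2 x s t (subst2 f Y) = f (\<chi> i. eval2 x s t (Y$i))"
    using P by auto
qed

lemma subst2_coord: "subst2 (\<lambda>x. x $ i) Y = Y $ i"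
  by (rule subst2_eqI) simp

lemma subst2_const: "subst2 (\<lambda>_. c) Y = [:[:(\<lambda>_. c):]:]"
  by (rule subst2_eqI) simp

lemma subst2_add:
  "f \<in> vpolys \<Longrightarrow> g \<in> vpolys \<Longrightarrow> (\<And>i. vpoly2 (Y$i)) \<Longrightarrow>
    subst2 (\<lambda>x. f x + g x) Y = subst2 f Y + subst2 g Y"
  by (rule subst2_eqI) (simp add: eval2_subst2)

lemma subst2_mult:
  "f \<in> vpolys \<Longrightarrow> g \<in> vpolys \<Longrightarrow> (\<And>i. vpoly2 (Y$i)) \<Longrightarrow>
    subst2 (\<lambda>x. f x * g x) Y = subst2 f Y * subst2 g Y"
  by (rule subst2_eqI) (simp add: eval2_subst2)

definition line2 ::
  "(('k::comm_ring_1,'n::finite) vfun poly)^'n \<Rightarrow> (('k,'n) vfun poly)^'n \<Rightarrow> (('k,'n) vfun poly poly)^'n" where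
  "line2 A B = (\<chi> i. pCons (A$i) [:B$i:])"

lemma vpoly_add: "vpoly p \<Longrightarrow> vpoly q \<Longrightarrow> vpoly (p + q)"
  using ring_closedD(3)[OF ring_closed_vpoly] by simp

lemma vpoly_zero: "vpoly ((0 :: (('k::comm_ring_1,'n::finite) vfun poly)^'m) $ i)"
  using ring_closedD(1)[OF ring_closed_vpoly] by simp

lemma vpoly2_line2: "(\<And>i. vpoly (A$i)) \<Longrightarrow> (\<And>i. vpoly (B$i)) \<Longrightarrow> vpoly2 (line2 A B $ i)"
  unfolding line2_def vpoly2_def vpoly_def
  by (simp add: poly_over_pCons poly_over_const ring_closed_poly_over ring_closed_vpolys)

lemma coeff_line2 [simp]:
  "coeff (line2 A B $ i) 0 = A $ i" "coeff (line2 A B $ i) (Suc 0) = B $ i"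
  by (simp_all add: line2_def)

lemma eval2_line2:
  "eval2 x s t (line2 A B $ i) = poly (eval_coeffs x (A$i)) t + s * poly (eval_coeffs x (B$i)) t"
  by (simp add: line2_def eval2_pCons eval2_def)

lemma coeff_mult_Suc_0:
  "coeff (p * q) (Suc 0) = coeff p 0 * coeff q (Suc 0) + coeff p (Suc 0) * coeff q 0"
  by (simp add: coeff_mult numeral_2_eq_2 atMost_Suc add.commute)

lemma subst2_coeff01_cong:
  fixes f :: "'k::field_char_0^'n::finite \<Rightarrow> 'k"
  assumes "f \<in> vpolys" "\<And>i. vpoly2 (Y$i)" "\<And>i. vpoly2 (Y'$i)"
    and "\<And>i. coeff (Y$i) 0 = coeff (Y'$i) 0" "\<And>i. coeff (Y$i) 1 = coeff (Y'$i) 1"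
  shows "coeff (subst2 f Y) 0 = coeff (subst2 f Y') 0 \<and> coeff (subst2 f Y) 1 = coeff (subst2 f Y') 1"
  using assms(1)
proof (induction rule: vpolys_induct)
  case (coord i)
  show ?case using assms(4,5)[of i] by (simp add: subst2_coord)
next
  case (const c)
  show ?case by (simp add: subst2_const)
next
  case (add f g)
  then show ?case by (simp add: subst2_add assms(2,3))
next
  case (mult f g)
  then show ?case by (simp add: subst2_mult assms(2,3) coeff_mult_0 coeff_mult_Suc_0)
qed

lemma poly_coeff0_subst2_line2:
  fixes f :: "'k::field_char_0^'n::finite \<Rightarrow> 'k"
  assumes "f \<in> vpolys" "\<And>i. vpoly (A$i)" "\<And>i. vpoly (B$i)"
  shows "poly (eval_coeffs x (coeff (subst2 f (line2 A B)) 0)) t = f (\<chi> i. poly (eval_coeffs x (A$i)) t)"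
  using eval2_subst2[OF assms(1) vpoly2_line2[OF assms(2,3)], of x 0 t]
  by (simp add: eval2_0 eval2_line2)

lemma coeff0_subst2_line2_cong:
  fixes f :: "'k::field_char_0^'n::finite \<Rightarrow> 'k"
  assumes "f \<in> vpolys" "\<And>i. vpoly (A$i)" "\<And>i. vpoly (B$i)" "\<And>i. vpoly (B'$i)"
  shows "coeff (subst2 f (line2 A B)) 0 = coeff (subst2 f (line2 A B')) 0"
  by (rule eval_coeffs_inject) (simp add: poly_coeff0_subst2_line2 assms)

lemma coeff1_subst2_line2_add:
  fixes f :: "'k::field_char_0^'n::finite \<Rightarrow> 'k"
  assumes "f \<in> vpolys" "\<And>i. vpoly (A$i)" "\<And>i. vpoly (B$i)" "\<And>i. vpoly (C$i)"
  shows "coeff (subst2 f (line2 A (B + C))) 1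
       = coeff (subst2 f (line2 A B)) 1 + coeff (subst2 f (line2 A C)) 1"
  using assms(1)
proof (induction rule: vpolys_induct)
  case (coord i)
  then show ?case by (simp add: subst2_coord)
next
  case (const c)
  then show ?case by (simp add: subst2_const)
next
  case (add f g)
  have "\<And>i. vpoly ((B + C)$i)" using assms(3,4) by (simp add: vpoly_add)
  with add show ?case using assms by (simp add: subst2_add vpoly2_line2)
next
  case (mult f g)
  have BC: "\<And>i. vpoly ((B + C)$i)" using assms(3,4) by (simp add: vpoly_add)
  have "coeff (subst2 h (line2 A (B + C))) 0 = coeff (subst2 h (line2 A C)) 0"
    "coeff (subst2 h (line2 A B)) 0 = coeff (subst2 h (line2 A C)) 0" if "h \<in> vpolys" for h
    using coeff0_subst2_line2_cong[OF that assms(2)] assms(3,4) BC by blast+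
  with mult BC assms show ?case
    by (simp add: subst2_mult vpoly2_line2 coeff_mult_0 coeff_mult_Suc_0 algebra_simps)
qed

text \<open>The ring of polynomial functions has zero divisors, so the library's \<open>pderiv\<close> does not apply.\<close>

definition formal_deriv :: "'a::comm_semiring_1 poly \<Rightarrow> 'a poly" where
  "formal_deriv p = (\<Sum>n<degree p. monom (of_nat (Suc n) * coeff p (Suc n)) n)"

lemma coeff_formal_deriv: "coeff (formal_deriv p) n = of_nat (Suc n) * coeff p (Suc n)"
proof -
  have "coeff (formal_deriv p) n = (\<Sum>m<degree p. if m = n then of_nat (Suc m) * coeff p (Suc m) else 0)"
    unfolding formal_deriv_def coeff_sum coeff_monom by (intro sum.cong) auto
  also have "\<dots> = of_nat (Suc n) * coeff p (Suc n)"
    by (cases "n < degree p") (auto simp: coeff_eq_0)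
  finally show ?thesis .
qed

lemma formal_deriv_pCons: "formal_deriv (pCons a p) = p + pCons 0 (formal_deriv p)"
  by (rule poly_eqI) (auto simp: coeff_formal_deriv coeff_pCons algebra_simps split: nat.splits)

lemma vpoly_formal_deriv: "vpoly A \<Longrightarrow> vpoly (formal_deriv A)"
  unfolding vpoly_iff_coeff coeff_formal_deriv of_nat_fun times_fun_def by (blast intro: vpolys_scale)

text \<open>\<open>shift2 p\<close> is \<open>p(t + s)\<close>, whose first-order part in \<open>s\<close> is the derivative of \<open>p\<close>.\<close>

definition shift2 :: "('k::comm_ring_1,'n::finite) vfun poly \<Rightarrow> ('k,'n) vfun poly poly" where
  "shift2 p = poly (map_poly (\<lambda>c. [:[:c:]:]) p) [:[:0, 1:], 1:]"

lemma shift2_pCons: "shift2 (pCons a p) = [:[:a:]:] + [:[:0, 1:], 1:] * shift2 p"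
  unfolding shift2_def by (simp add: map_poly_pCons)

lemma coeff_shift2: "coeff (shift2 p) 0 = p \<and> coeff (shift2 p) (Suc 0) = formal_deriv p"
proof (induction p)
  case 0
  then show ?case by (simp add: shift2_def formal_deriv_def)
next
  case (pCons a p)
  then show ?case unfolding shift2_pCons
    by (simp add: coeff_mult_0 coeff_mult_Suc_0 formal_deriv_pCons add_pCons[symmetric] algebra_simps)
qed

lemma eval2_shift2: "eval2 x s t (shift2 p) = poly (eval_coeffs x p) (t + s)"
proof (induction p)
  case 0
  then show ?case by (simp add: shift2_def eval2_def)
next
  case (pCons a p)
  have "eval2 x s t [:[:0, 1:], 1:] = t + s" by (simp add: eval2_pCons eval2_def)
  moreover have "eval2 x s t (shift2 (pCons a p))
      = eval2 x s t [:[:a:]:] + eval2 x s t [:[:0, 1:], 1:] * eval2 x s t (shift2 p)"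
    unfolding shift2_pCons by (simp only: eval2_add eval2_mult)
  ultimately show ?case using pCons(2) by (simp add: algebra_simps)
qed

lemma vpoly2_shift2: "vpoly p \<Longrightarrow> vpoly2 (shift2 p)"
  unfolding vpoly2_def shift2_def vpoly_def
proof (rule poly_over_poly[OF ring_closed_poly_over[OF ring_closed_vpolys]])
  assume p: "p \<in> poly_over vpolys"
  have "[:[:coeff p b:]:] \<in> poly_over (poly_over vpolys)" for b
  proof -
    have "coeff p b \<in> vpolys" using p unfolding poly_over_def by auto
    then show ?thesis by (simp add: poly_over_const ring_closed_poly_over ring_closed_vpolys)
  qed
  then show "map_poly (\<lambda>c. [:[:c:]:]) p \<in> poly_over (poly_over (poly_over vpolys))"
    unfolding poly_over_def[of "poly_over (poly_over vpolys)"] by (simp add: coeff_map_poly)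
  show "[:[:0, 1:], 1:] \<in> poly_over (poly_over vpolys)"
    by (intro poly_over_pCons poly_over_const ring_closed_poly_over ring_closed_vpolys
        ring_closedD[OF ring_closed_poly_over] ring_closedD[OF ring_closed_vpolys])
qed

lemma coeff1_subst2_line2_formal_deriv:
  fixes f :: "'k::field_char_0^'n::finite \<Rightarrow> 'k"
  assumes f: "f \<in> vpolys" and A: "\<And>i. vpoly (A$i)"
  shows "formal_deriv (coeff (subst2 f (line2 A 0)) 0)
       = coeff (subst2 f (line2 A (\<chi> i. formal_deriv (A$i)))) 1"
proof -
  define h where "h = coeff (subst2 f (line2 A 0)) 0"
  have A': "\<And>i. vpoly ((\<chi> i. formal_deriv (A$i)) $ i)" by (simp add: A vpoly_formal_deriv)
  have "subst2 f (\<chi> i. shift2 (A$i)) = shift2 h"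
    by (rule subst2_eqI)
      (simp add: eval2_shift2 h_def poly_coeff0_subst2_line2[OF f A vpoly_zero])
  moreover have "coeff (subst2 f (\<chi> i. shift2 (A$i))) 1 = coeff (subst2 f (line2 A (\<chi> i. formal_deriv (A$i)))) 1"
    using subst2_coeff01_cong[OF f _ vpoly2_line2[OF A A']] coeff_shift2[of "A$_"]
    by (simp add: A vpoly2_shift2)
  ultimately show ?thesis using coeff_shift2[of h] by (simp add: h_def)
qed

text \<open>
  The \<open>s\<close>-linear term of \<open>f(A + s Z)\<close> is the \<open>\<mu>\<close>-derivative at \<open>0\<close> of \<open>f(A + \<mu> Z)\<close>, so it
  vanishes (coefficientwise in \<open>t\<close>, at a point \<open>x\<close>) as soon as the latter does for all \<open>\<mu>\<close>.
\<close>

lemma coeff1_subst2_line2_vanishes: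
  fixes f :: "'k::field_char_0^'n::finite \<Rightarrow> 'k"
  assumes f: "f \<in> vpolys" and A: "\<And>i. vpoly (A$i)" and Z: "\<And>i. vpoly (Z$i)"
    and vanish: "\<And>\<mu>. coeff (coeff (subst2 f (line2 (\<chi> i. A$i + smult (\<lambda>_. \<mu>) (Z$i)) 0)) 0) k x = 0"
  shows "coeff (coeff (subst2 f (line2 A Z)) 1) k x = 0"
proof -
  define M where "M = subst2 f (line2 A Z)"
  define c where "c = map_poly (\<lambda>q. coeff q k) (eval_coeffs2 x M)"
  have A\<mu>: "vpoly ((\<chi> i. A$i + smult (\<lambda>_. \<mu>) (Z$i)) $ i)" for \<mu> i
    using A Z unfolding vpoly_iff_coeff
    by (simp add: ring_closedD(3,4)[OF ring_closed_vpolys] vpolys_const)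
  have "poly c \<mu> = 0" for \<mu>
  proof -
    define h where "h = coeff (subst2 f (line2 (\<chi> i. A$i + smult (\<lambda>_. \<mu>) (Z$i)) 0)) 0"
    have "eval_coeffs x h = poly (eval_coeffs2 x M) [:\<mu>:]"
    proof (rule poly_ext)
      fix t
      have "poly (eval_coeffs x h) t
          = f (\<chi> i. poly (eval_coeffs x (A$i)) t + \<mu> * poly (eval_coeffs x (Z$i)) t)"
        by (simp add: h_def poly_coeff0_subst2_line2[OF f A\<mu> vpoly_zero])
      also have "\<dots> = eval2 x \<mu> t M"
        by (simp add: M_def eval2_subst2[OF f vpoly2_line2[OF A Z]] eval2_line2)
      finally show "poly (eval_coeffs x h) t = poly (poly (eval_coeffs2 x M) [:\<mu>:]) t"
        by (simp add: eval2_def)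
    qed
    then have "coeff (eval_coeffs x h) k = poly c \<mu>"
      by (simp only: c_def coeff_poly_const)
    then show ?thesis using vanish[of \<mu>] by (simp add: h_def)
  qed
  then have "c = 0" by (intro poly_ext) simp
  then show ?thesis by (metis M_def c_def coeff_0 coeff_eval_coeffs coeff_eval_coeffs2 coeff_map_poly)
qed

section \<open>Derivatives of equivariant maps along equivariant vector fields\<close>

lemma equivariant_id: "equivariant_poly_map G \<rho> (\<lambda>y. y)"
  by (simp add: equivariant_poly_map_def poly_map_def vpolys_coord)

lemma equivariant_zero: "equivariant_poly_map G \<rho> (\<lambda>y. 0)"
  by (simp add: equivariant_poly_map_def poly_map_def vpolys_const)

lemma equivariant_add:
  "equivariant_poly_map G \<rho> \<phi> \<Longrightarrow> equivariant_poly_map G \<rho> \<psi> \<Longrightarrow>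
    equivariant_poly_map G \<rho> (\<lambda>y. \<phi> y + \<psi> y)"
  by (simp add: equivariant_poly_map_def poly_map_def vpolys_add matrix_vector_right_distrib)

lemma equivariant_diff:
  "equivariant_poly_map G \<rho> \<phi> \<Longrightarrow> equivariant_poly_map G \<rho> \<psi> \<Longrightarrow>
    equivariant_poly_map G \<rho> (\<lambda>y. \<phi> y - \<psi> y)"
  by (simp add: equivariant_poly_map_def poly_map_def vpolys_diff matrix_vector_mult_diff_distrib)

lemma equivariant_scale: "equivariant_poly_map G \<rho> \<phi> \<Longrightarrow> equivariant_poly_map G \<rho> (\<lambda>y. c *s \<phi> y)"
  by (simp add: equivariant_poly_map_def poly_map_def vpolys_scale vector_scalar_commute)

lemma equivariant_comp:
  "equivariant_poly_map G \<rho> \<xi> \<Longrightarrow> equivariant_poly_map G \<rho> \<phi> \<Longrightarrow>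
    equivariant_poly_map G \<rho> (\<lambda>y. \<xi> (\<phi> y))"
  unfolding equivariant_poly_map_def
  by (auto simp: poly_map_def intro: vpolys_comp[unfolded poly_map_def])

lemma equivariant_coord_vpolys: "equivariant_poly_map G \<rho> \<phi> \<Longrightarrow> (\<lambda>y. \<phi> y $ i) \<in> vpolys"
  by (simp add: equivariant_poly_map_def poly_map_def)

definition deriv_along :: "('k::field_char_0^'n::finite \<Rightarrow> 'k^'n) \<Rightarrow> ('k^'n \<Rightarrow> 'k^'n) \<Rightarrow> 'k^'n \<Rightarrow> 'k^'n" where
  "deriv_along \<phi> \<xi> y = (\<chi> i. dderiv (\<lambda>z. \<phi> z $ i) y (\<xi> y))"

definition line_field :: "('k::field_char_0^'n::finite \<Rightarrow> 'k^'n) \<Rightarrow> (('k,'n) vfun poly poly)^'n" where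
  "line_field \<xi> = line2 (\<chi> l. [:(\<lambda>y. y $ l):]) (\<chi> l. [:(\<lambda>y. \<xi> y $ l):])"

lemma vpoly2_line_field: "poly_map \<xi> \<Longrightarrow> vpoly2 (line_field \<xi> $ i)"
  unfolding line_field_def poly_map_def by (intro vpoly2_line2) (simp_all add: vpoly_const vpolys_coord)

lemma eval2_line_field: "(\<chi> i. eval2 x s t (line_field \<xi> $ i)) = x + s *s \<xi> x"
  by (simp add: line_field_def eval2_line2 vec_eq_iff)

lemma
  fixes \<phi> \<xi> :: "'k::field_char_0^'n::finite \<Rightarrow> 'k^'n"
  assumes "poly_map \<phi>" "poly_map \<xi>"
  shows vpoly2_subst2_line_field: "vpoly2 (subst2 (\<lambda>z. \<phi> z $ i) (line_field \<xi>))"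
    and eval2_subst2_line_field:
      "eval2 x s t (subst2 (\<lambda>z. \<phi> z $ i) (line_field \<xi>)) = \<phi> (x + s *s \<xi> x) $ i"
    and coeff0_subst2_line_field:
      "coeff (subst2 (\<lambda>z. \<phi> z $ i) (line_field \<xi>)) 0 = [:(\<lambda>y. \<phi> y $ i):]"
    and coeff1_subst2_line_field:
      "coeff (subst2 (\<lambda>z. \<phi> z $ i) (line_field \<xi>)) 1 = [:(\<lambda>y. deriv_along \<phi> \<xi> y $ i):]"
proof -
  define P where "P = subst2 (\<lambda>z. \<phi> z $ i) (line_field \<xi>)"
  have f: "(\<lambda>z. \<phi> z $ i) \<in> vpolys" using assms(1) by (simp add: poly_map_def)
  note vp = vpoly2_line_field[OF assms(2)]
  show "vpoly2 (subst2 (\<lambda>z. \<phi> z $ i) (line_field \<xi>))" by (rule vpoly2_subst2[OF f vp])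
  have ev: "eval2 x s t P = \<phi> (x + s *s \<xi> x) $ i" for x s t
    using eval2_subst2[OF f vp, of x s t] by (simp add: P_def eval2_line_field)
  then show "eval2 x s t (subst2 (\<lambda>z. \<phi> z $ i) (line_field \<xi>)) = \<phi> (x + s *s \<xi> x) $ i"
    by (simp add: P_def)
  define Q where "Q x t = map_poly (\<lambda>q. poly (eval_coeffs x q) t) P" for x t
  have Q: "poly (Q x t) s = \<phi> (x + s *s \<xi> x) $ i" for x t s
    using ev[of x s t] unfolding eval2_as_poly_in_s Q_def by simp
  have coeff_Q: "coeff (Q x t) a = poly (eval_coeffs x (coeff P a)) t" for x t a
    unfolding Q_def by (simp add: coeff_map_poly)
  show "coeff (subst2 (\<lambda>z. \<phi> z $ i) (line_field \<xi>)) 0 = [:(\<lambda>y. \<phi> y $ i):]"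
  proof (fold P_def, rule eval_coeffs_inject)
    fix x t
    show "poly (eval_coeffs x (coeff P 0)) t = poly (eval_coeffs x [:(\<lambda>y. \<phi> y $ i):]) t"
      using Q[of x t 0] by (simp flip: coeff_Q add: poly_0_coeff_0)
  qed
  show "coeff (subst2 (\<lambda>z. \<phi> z $ i) (line_field \<xi>)) 1 = [:(\<lambda>y. deriv_along \<phi> \<xi> y $ i):]"
  proof (fold P_def, rule eval_coeffs_inject)
    fix x t
    have "dderiv (\<lambda>z. \<phi> z $ i) x (\<xi> x) = coeff (Q x t) 1"
      by (rule dderiv_eq_coeff) (simp add: Q)
    then show "poly (eval_coeffs x (coeff P 1)) t = poly (eval_coeffs x [:(\<lambda>y. deriv_along \<phi> \<xi> y $ i):]) t"
      by (simp add: coeff_Q deriv_along_def)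
  qed
qed

lemma poly_map_deriv_along:
  assumes "poly_map \<phi>" "poly_map \<xi>"
  shows "poly_map (deriv_along \<phi> \<xi>)"
  unfolding poly_map_def
proof
  fix i
  have "(\<lambda>y. deriv_along \<phi> \<xi> y $ i) = coeff (coeff (subst2 (\<lambda>z. \<phi> z $ i) (line_field \<xi>)) 1) 0"
    using coeff1_subst2_line_field[OF assms, of i] by simp
  then show "(\<lambda>y. deriv_along \<phi> \<xi> y $ i) \<in> vpolys"
    using vpoly2_subst2_line_field[OF assms, of i] by (simp add: vpoly2_iff_coeff)
qed

lemma deriv_along_commute:
  fixes \<phi> \<xi> :: "'k::field_char_0^'n::finite \<Rightarrow> 'k^'n"
  assumes "poly_map \<phi>" "\<And>y. \<phi> (A *v y) = A *v \<phi> y" "\<And>y. \<xi> (A *v y) = A *v \<xi> y"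
  shows "deriv_along \<phi> \<xi> (A *v y) = A *v deriv_along \<phi> \<xi> y"
proof -
  obtain p where p: "\<And>l s. poly (p l) s = \<phi> (y + s *s \<xi> y) $ l"
    using vpolys_restrict_line[of "\<lambda>z. \<phi> z $ _" y "\<xi> y"] assms(1)
    by (metis poly_map_def)
  have d: "dderiv (\<lambda>z. \<phi> z $ l) y (\<xi> y) = coeff (p l) 1" for l
    by (rule dderiv_eq_coeff) (simp add: p)
  have "deriv_along \<phi> \<xi> (A *v y) $ i = (A *v deriv_along \<phi> \<xi> y) $ i" for i
  proof -
    have "\<phi> (A *v y + s *s \<xi> (A *v y)) = A *v \<phi> (y + s *s \<xi> y)" for s
      by (simp add: assms(2,3) matrix_vector_right_distrib vector_scalar_commute flip: assms(2))
    then have "poly (\<Sum>l\<in>UNIV. smult (A$i$l) (p l)) s = \<phi> (A *v y + s *s \<xi> (A *v y)) $ i" for s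
      by (simp add: poly_sum p matrix_vector_mult_def)
    then have "dderiv (\<lambda>z. \<phi> z $ i) (A *v y) (\<xi> (A *v y)) = coeff (\<Sum>l\<in>UNIV. smult (A$i$l) (p l)) 1"
      by (intro dderiv_eq_coeff) simp
    then show ?thesis by (simp add: deriv_along_def d coeff_sum matrix_vector_mult_def)
  qed
  then show ?thesis by (simp add: vec_eq_iff)
qed

lemma equivariant_deriv_along:
  "equivariant_poly_map G \<rho> \<phi> \<Longrightarrow> equivariant_poly_map G \<rho> \<xi> \<Longrightarrow>
    equivariant_poly_map G \<rho> (deriv_along \<phi> \<xi>)"
  unfolding equivariant_poly_map_def by (simp add: poly_map_deriv_along deriv_along_commute)

lemma deriv_along_zero:
  fixes y :: "'k::field_char_0^'n::finite"
  shows "deriv_along (\<lambda>y. 0) \<xi> y = 0"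
proof -
  have "dderiv (\<lambda>z. (0 :: 'k^'n) $ i) y (\<xi> y) = coeff 0 1" for i
    by (rule dderiv_eq_coeff) simp
  then show ?thesis by (simp add: deriv_along_def vec_eq_iff)
qed

lemma deriv_along_id: "deriv_along (\<lambda>y. y) \<xi> y = \<xi> y"
proof -
  have "dderiv (\<lambda>z. z $ i) y (\<xi> y) = coeff [:y $ i, \<xi> y $ i:] 1" for i
    by (rule dderiv_eq_coeff) (simp add: algebra_simps)
  then show ?thesis by (simp add: deriv_along_def vec_eq_iff)
qed

definition equivariant_family ::
  "('k::field_char_0 ^ 'm ^ 'm) set \<Rightarrow> ('k ^ 'm ^ 'm \<Rightarrow> 'k ^ 'n::finite ^ 'n) \<Rightarrow> nat \<Rightarrow>
    (nat \<Rightarrow> 'k^'n \<Rightarrow> 'k^'n) \<Rightarrow> bool" where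
  "equivariant_family G \<rho> N \<psi> \<longleftrightarrow>
     (\<forall>y. \<psi> 0 y = y) \<and> (\<forall>j. equivariant_poly_map G \<rho> (\<psi> j)) \<and> (\<forall>j>N. \<forall>y. \<psi> j y = 0)"

definition family_eval :: "nat \<Rightarrow> (nat \<Rightarrow> 'k::field_char_0^'n::finite \<Rightarrow> 'k^'n) \<Rightarrow> 'k \<Rightarrow> 'k^'n \<Rightarrow> 'k^'n" where
  "family_eval N \<psi> t x = (\<Sum>j\<le>N. t^j *s \<psi> j x)"

definition family_poly :: "nat \<Rightarrow> (nat \<Rightarrow> 'k::field_char_0^'n::finite \<Rightarrow> 'k^'n) \<Rightarrow> (('k,'n) vfun poly)^'n" where
  "family_poly N \<psi> = (\<chi> i. \<Sum>j\<le>N. monom (\<lambda>y. \<psi> j y $ i) j)"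

text \<open>\<open>comp_family f N \<psi>\<close> is \<open>f \<circ> \<Phi>\<^sub>t\<close> as a polynomial in \<open>t\<close>; \<open>family_deriv_along N \<psi>\<close> is \<open>d\<Phi>\<^sub>t \<psi>\<^sub>1\<close>.\<close>

definition comp_family ::
  "('k::field_char_0^'n::finite \<Rightarrow> 'k) \<Rightarrow> nat \<Rightarrow> (nat \<Rightarrow> 'k^'n \<Rightarrow> 'k^'n) \<Rightarrow> ('k,'n) vfun poly" where
  "comp_family f N \<psi> = coeff (subst2 f (line2 (family_poly N \<psi>) 0)) 0"

definition family_deriv_along ::
  "nat \<Rightarrow> (nat \<Rightarrow> 'k::field_char_0^'n::finite \<Rightarrow> 'k^'n) \<Rightarrow> (('k,'n) vfun poly)^'n" where
  "family_deriv_along N \<psi> = (\<chi> i. \<Sum>j\<le>N. monom (\<lambda>y. deriv_along (\<psi> j) (\<psi> 1) y $ i) j)"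

definition family_defect ::
  "nat \<Rightarrow> (nat \<Rightarrow> 'k::field_char_0^'n::finite \<Rightarrow> 'k^'n) \<Rightarrow> (('k,'n) vfun poly)^'n" where
  "family_defect N \<psi> = (\<chi> i. family_deriv_along N \<psi> $ i - formal_deriv (family_poly N \<psi> $ i))"

text \<open>The family \<open>\<Phi>\<^sub>t + \<mu> \<cdot> family_defect N \<psi>\<close>, see \<open>family_poly_perturb\<close>.\<close>

definition family_perturb ::
  "(nat \<Rightarrow> 'k::field_char_0^'n::finite \<Rightarrow> 'k^'n) \<Rightarrow> 'k \<Rightarrow> nat \<Rightarrow> 'k^'n \<Rightarrow> 'k^'n" where
  "family_perturb \<psi> \<mu> j y = (if j = 0 then y
     else \<psi> j y + \<mu> *s (deriv_along (\<psi> j) (\<psi> 1) y - of_nat (Suc j) *s \<psi> (Suc j) y))"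

lemma equivariant_familyD:
  assumes "equivariant_family G \<rho> N \<psi>"
  shows "\<psi> 0 = (\<lambda>y. y)" "equivariant_poly_map G \<rho> (\<psi> j)" "poly_map (\<psi> j)"
    "j > N \<Longrightarrow> \<psi> j = (\<lambda>y. 0)"
  using assms by (auto simp: equivariant_family_def equivariant_poly_map_def)

lemma family_eval_0: "family_eval N \<psi> 0 x = \<psi> 0 x"
  by (induction N) (simp_all add: family_eval_def)

lemma sum_atMost_if_eq: "(\<Sum>j\<le>(N::nat). if j = m then c j else 0) = (if m \<le> N then c m else 0)"
  by (induction N) auto

lemma coeff_family_poly:
  assumes "equivariant_family G \<rho> N \<psi>"
  shows "coeff (family_poly N \<psi> $ i) m = (\<lambda>y. \<psi> m y $ i)"
  using equivariant_familyD(4)[OF assms, of m]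
  by (auto simp: family_poly_def coeff_sum sum_atMost_if_eq fun_eq_iff)

lemma vpoly_family_poly:
  assumes "equivariant_family G \<rho> N \<psi>"
  shows "vpoly (family_poly N \<psi> $ i)"
  unfolding vpoly_iff_coeff coeff_family_poly[OF assms]
  by (simp add: equivariant_coord_vpolys[OF equivariant_familyD(2)[OF assms]])

lemma poly_family_poly: "poly (eval_coeffs x (family_poly N \<psi> $ i)) t = family_eval N \<psi> t x $ i"
  by (simp add: family_poly_def family_eval_def poly_sum poly_monom mult.commute)

lemma poly_comp_family:
  assumes "f \<in> vpolys" "equivariant_family G \<rho> N \<psi>"
  shows "poly (eval_coeffs x (comp_family f N \<psi>)) t = f (family_eval N \<psi> t x)"
  using poly_coeff0_subst2_line2[OF assms(1) vpoly_family_poly[OF assms(2)] vpoly_zero]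
  by (simp add: comp_family_def poly_family_poly vec_eq_iff[symmetric])

lemma coeff_family_deriv_along:
  assumes "equivariant_family G \<rho> N \<psi>"
  shows "coeff (family_deriv_along N \<psi> $ i) m = (\<lambda>y. deriv_along (\<psi> m) (\<psi> 1) y $ i)"
proof (cases "m \<le> N")
  case False
  then have "deriv_along (\<psi> m) (\<psi> 1) y = 0" for y
    using equivariant_familyD(4)[OF assms] deriv_along_zero by simp
  with False show ?thesis
    by (simp add: family_deriv_along_def coeff_sum sum_atMost_if_eq fun_eq_iff)
qed (simp add: family_deriv_along_def coeff_sum sum_atMost_if_eq)

lemma vpoly_family_deriv_along:
  assumes "equivariant_family G \<rho> N \<psi>"
  shows "vpoly (family_deriv_along N \<psi> $ i)"
  unfolding vpoly_iff_coeff coeff_family_deriv_along[OF assms]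
  by (intro allI equivariant_coord_vpolys[of G \<rho>] equivariant_deriv_along equivariant_familyD(2)[OF assms])

lemma coeff_family_defect:
  assumes "equivariant_family G \<rho> N \<psi>"
  shows "coeff (family_defect N \<psi> $ i) m
    = (\<lambda>y. deriv_along (\<psi> m) (\<psi> 1) y $ i - of_nat (Suc m) * \<psi> (Suc m) y $ i)"
  by (simp add: family_defect_def coeff_family_deriv_along[OF assms] coeff_formal_deriv
      coeff_family_poly[OF assms] fun_eq_iff)

lemma vpoly_family_defect:
  assumes "equivariant_family G \<rho> N \<psi>"
  shows "vpoly (family_defect N \<psi> $ i)"
  unfolding vpoly_iff_coeff coeff_family_defect[OF assms]
  by (intro allI vpolys_diff vpolys_scale equivariant_coord_vpolys[of G \<rho>] equivariant_deriv_along
      equivariant_familyD(2)[OF assms])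

lemma equivariant_family_perturb:
  assumes fam: "equivariant_family G \<rho> N \<psi>"
  shows "equivariant_family G \<rho> N (family_perturb \<psi> \<mu>)"
proof -
  have "equivariant_poly_map G \<rho> (family_perturb \<psi> \<mu> j)" for j
  proof (cases "j = 0")
    case True
    have "family_perturb \<psi> \<mu> 0 = (\<lambda>y. y)" by (rule ext) (simp add: family_perturb_def)
    then show ?thesis using True equivariant_id by simp
  next
    case False
    then show ?thesis
      unfolding family_perturb_def
      by (simp add: equivariant_add equivariant_scale equivariant_diff equivariant_deriv_along
          equivariant_familyD(2)[OF fam])
  qed
  moreover have "family_perturb \<psi> \<mu> j y = 0" if "j > N" for j y
    using that equivariant_familyD(4)[OF fam, of j] equivariant_familyD(4)[OF fam, of "Suc j"]
    by (simp add: family_perturb_def deriv_along_zero)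
  ultimately show ?thesis by (simp add: equivariant_family_def family_perturb_def)
qed

text \<open>The constant term of the perturbation vanishes because \<open>d(id) \<psi>\<^sub>1 = \<psi>\<^sub>1\<close>.\<close>

lemma family_poly_perturb:
  assumes fam: "equivariant_family G \<rho> N \<psi>"
  shows "family_poly N (family_perturb \<psi> \<mu>)
    = (\<chi> i. family_poly N \<psi> $ i + smult (\<lambda>_. \<mu>) (family_defect N \<psi> $ i))"
proof -
  note fam' = equivariant_family_perturb[OF fam, of \<mu>]
  have "coeff (family_poly N (family_perturb \<psi> \<mu>) $ i) m
      = coeff (family_poly N \<psi> $ i + smult (\<lambda>_. \<mu>) (family_defect N \<psi> $ i)) m" for i m
    by (cases "m = 0")
      (auto simp: coeff_family_poly[OF fam'] coeff_family_poly[OF fam] coeff_family_defect[OF fam]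
        family_perturb_def fun_eq_iff equivariant_familyD(1)[OF fam] deriv_along_id algebra_simps)
  then show ?thesis by (simp add: vec_eq_iff poly_eq_iff)
qed

section \<open>Symmetric subvarieties are stable under equivariant maps\<close>

lemma vpoly2_t_power: "vpoly2 [:monom 1 j:]"
  by (auto simp: vpoly2_iff_coeff coeff_pCons ring_closedD(1,2)[OF ring_closed_vpolys]
      split: nat.splits)

lemma dderiv_coeff_comp_family:
  assumes f: "f \<in> vpolys" and fam: "equivariant_family G \<rho> N \<psi>"
  shows "dderiv (coeff (comp_family f N \<psi>) k) x (\<psi> 1 x)
       = coeff (coeff (subst2 f (line2 (family_poly N \<psi>) (family_deriv_along N \<psi>))) 1) k x"
proof -
  define P where "P j i = subst2 (\<lambda>z. \<psi> j z $ i) (line_field (\<psi> 1))" for j i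
  note pm = equivariant_familyD(3)[OF fam]
  define Y where "Y = (\<chi> i. \<Sum>j\<le>N. [:monom 1 j:] * P j i)"
  have vY: "vpoly2 (Y $ i)" for i
    unfolding Y_def P_def vec_lambda_beta
    by (intro vpoly2_sum vpoly2_mult vpoly2_t_power vpoly2_subst2_line_field pm)
  have t_power: "eval2 x s t [:monom 1 j:] = t ^ j" for s t j
    by (simp add: eval2_pCons poly_monom one_fun_def[symmetric] eval2_def)
  have "(\<chi> i. eval2 x s t (Y $ i)) = family_eval N \<psi> t (x + s *s \<psi> 1 x)" for s t
    unfolding Y_def vec_lambda_beta eval2_sum eval2_mult t_power
    by (simp add: P_def eval2_subst2_line_field pm family_eval_def vec_eq_iff)
  then have L: "eval2 x s t (subst2 f Y) = f (family_eval N \<psi> t (x + s *s \<psi> 1 x))" for s t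
    by (simp add: eval2_subst2[OF f vY])
  define c where "c = map_poly (\<lambda>q. coeff q k) (eval_coeffs2 x (subst2 f Y))"
  have "poly c s = coeff (comp_family f N \<psi>) k (x + s *s \<psi> 1 x)" for s
  proof -
    have "eval_coeffs (x + s *s \<psi> 1 x) (comp_family f N \<psi>) = poly (eval_coeffs2 x (subst2 f Y)) [:s:]"
      by (rule poly_ext) (simp add: poly_comp_family[OF f fam] L[unfolded eval2_def])
    then show ?thesis by (metis c_def coeff_eval_coeffs coeff_poly_const)
  qed
  then have "dderiv (coeff (comp_family f N \<psi>) k) x (\<psi> 1 x) = coeff (coeff (subst2 f Y) 1) k x"
    by (subst dderiv_eq_coeff[of c]) (simp_all add: c_def coeff_map_poly)
  moreover have "coeff (Y $ i) 0 = family_poly N \<psi> $ i" "coeff (Y $ i) 1 = family_deriv_along N \<psi> $ i" for i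
    by (simp_all add: Y_def P_def coeff_sum coeff0_subst2_line_field pm
        coeff1_subst2_line_field[unfolded One_nat_def]
        smult_monom family_poly_def family_deriv_along_def)
  then have "coeff (subst2 f Y) 1 = coeff (subst2 f (line2 (family_poly N \<psi>) (family_deriv_along N \<psi>))) 1"
    using subst2_coeff01_cong[OF f vY vpoly2_line2[OF vpoly_family_poly[OF fam]
          vpoly_family_deriv_along[OF fam]]] by simp
  ultimately show ?thesis by simp
qed

lemma coeff_comp_family_Suc_vanishes:
  assumes tangent: "\<forall>\<xi>. equivariant_poly_map G \<rho> \<xi> \<longrightarrow> (\<forall>x\<in>X. \<xi> x \<in> tangent_space X x)"
    and f: "f \<in> vpolys"
    and IH: "\<And>\<psi>'. equivariant_family G \<rho> N \<psi>' \<Longrightarrow> \<forall>y\<in>X. coeff (comp_family f N \<psi>') k y = 0"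
    and fam: "equivariant_family G \<rho> N \<psi>" and x: "x \<in> X"
  shows "coeff (comp_family f N \<psi>) (Suc k) x = 0"
proof -
  define h where "h = comp_family f N \<psi>"
  define D where "D B = coeff (subst2 f (line2 (family_poly N \<psi>) B)) 1" for B
  note \<Phi> = vpoly_family_poly[OF fam] and Z = vpoly_family_defect[OF fam]
  have "coeff h k \<in> vpolys"
    using vpoly2_subst2[OF f vpoly2_line2[OF \<Phi> vpoly_zero]]
    by (simp add: h_def comp_family_def vpoly2_iff_coeff)
  moreover have "\<forall>y\<in>X. coeff h k y = 0" using IH[OF fam] by (simp add: h_def)
  moreover have "\<psi> 1 x \<in> tangent_space X x"
    using tangent equivariant_familyD(2)[OF fam] x by blast
  ultimately have "dderiv (coeff h k) x (\<psi> 1 x) = 0" by (simp add: tangent_space_def)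
  then have along: "coeff (D (family_deriv_along N \<psi>)) k x = 0"
    using dderiv_coeff_comp_family[OF f fam] by (simp add: h_def D_def)
  have defect: "coeff (D (family_defect N \<psi>)) k x = 0"
    unfolding D_def
  proof (rule coeff1_subst2_line2_vanishes[OF f \<Phi> Z])
    fix \<mu>
    show "coeff (coeff (subst2 f (line2 (\<chi> i. family_poly N \<psi> $ i + smult (\<lambda>_. \<mu>) (family_defect N \<psi> $ i)) 0)) 0) k x = 0"
      using IH[OF equivariant_family_perturb[OF fam, of \<mu>]] x
      by (simp add: comp_family_def family_poly_perturb[OF fam])
  qed
  have "family_deriv_along N \<psi> = family_defect N \<psi> + (\<chi> i. formal_deriv (family_poly N \<psi> $ i))"
    by (simp add: family_defect_def vec_eq_iff)
  then have "D (family_deriv_along N \<psi>) = D (family_defect N \<psi>) + formal_deriv h"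
    using coeff1_subst2_line2_add[OF f \<Phi> Z, of "\<chi> i. formal_deriv (family_poly N \<psi> $ i)"]
      coeff1_subst2_line2_formal_deriv[OF f \<Phi>]
    by (simp add: D_def h_def comp_family_def vpoly_formal_deriv \<Phi>)
  then have "coeff (formal_deriv h) k x = 0" using along defect by simp
  then have "of_nat (Suc k) * coeff h (Suc k) x = 0" by (simp add: coeff_formal_deriv del: of_nat_Suc)
  then show ?thesis by (simp add: h_def del: of_nat_Suc)
qed

lemma coeff_comp_family_vanishes:
  assumes tangent: "\<forall>\<xi>. equivariant_poly_map G \<rho> \<xi> \<longrightarrow> (\<forall>x\<in>X. \<xi> x \<in> tangent_space X x)"
    and f: "f \<in> vpolys" "\<forall>y\<in>X. f y = 0"
  shows "equivariant_family G \<rho> N \<psi> \<Longrightarrow> x \<in> X \<Longrightarrow> coeff (comp_family f N \<psi>) k x = 0"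
proof (induction k arbitrary: \<psi> x)
  case 0
  have "coeff (comp_family f N \<psi>) 0 x = f (family_eval N \<psi> 0 x)"
    using poly_comp_family[OF f(1) 0(1), of x 0] by (simp add: poly_0_coeff_0)
  then show ?case using 0 f(2) by (simp add: family_eval_0 equivariant_familyD(1))
next
  case (Suc k)
  then show ?case using coeff_comp_family_Suc_vanishes[OF tangent f(1)] by blast
qed

lemma G_symmetric_equivariant_closed:
  fixes G :: "('k::field_char_0 ^ 'm ^ 'm) set"
  assumes X: "G_symmetric G \<rho> X" and v: "v \<in> X" and \<phi>: "equivariant_poly_map G \<rho> \<phi>"
  shows "\<phi> v \<in> X"
proof -
  obtain F where F: "F \<subseteq> vpolys" "X = {v. \<forall>f\<in>F. f v = 0}"
    using X unfolding G_symmetric_def closed_subvariety_def by blast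
  have tangent: "\<forall>\<xi>. equivariant_poly_map G \<rho> \<xi> \<longrightarrow> (\<forall>x\<in>X. \<xi> x \<in> tangent_space X x)"
    using X unfolding G_symmetric_def by blast
  define \<psi> where "\<psi> j = (if j = 0 then (\<lambda>y. y) else if j = 1 then (\<lambda>y. \<phi> y - y) else (\<lambda>y. 0))"
    for j :: nat
  have fam: "equivariant_family G \<rho> 1 \<psi>"
    unfolding equivariant_family_def \<psi>_def
    using equivariant_id equivariant_zero equivariant_diff[OF \<phi> equivariant_id] by auto
  have "f (\<phi> v) = 0" if "f \<in> F" for f
  proof -
    have f: "f \<in> vpolys" "\<forall>y\<in>X. f y = 0" using that F by auto
    have "eval_coeffs v (comp_family f 1 \<psi>) = 0"
      using coeff_comp_family_vanishes[OF tangent f fam v] by (intro poly_eqI) simp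
    then have "f (family_eval 1 \<psi> 1 v) = 0" using poly_comp_family[OF f(1) fam, of v 1] by simp
    then show ?thesis by (simp add: family_eval_def \<psi>_def)
  qed
  then show ?thesis using F(2) by auto
qed

section \<open>Linear subspaces\<close>

lemma subspace_separated_by_linear_form:
  fixes S :: "('k::field^'n::finite) set"
  assumes S: "vec.subspace S" and x: "x \<notin> S"
  shows "\<exists>f\<in>vpolys. (\<forall>y\<in>S. f y = 0) \<and> f x \<noteq> 0"
proof -
  interpret VP: vector_space_pair "(*s) :: 'k \<Rightarrow> 'k^'n \<Rightarrow> 'k^'n" "(*) :: 'k \<Rightarrow> 'k \<Rightarrow> 'k"
    by unfold_locales
  obtain B where B: "B \<subseteq> S" "vec.independent B" "S \<subseteq> vec.span B"
    using vec.maximal_independent_subset by blast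
  have xB: "x \<notin> vec.span B" using vec.span_minimal[OF B(1) S] x by auto
  obtain g where g: "Vector_Spaces.linear (*s) (*) g" "\<forall>z\<in>insert x B. g z = (if z = x then 1 else 0)"
    using VP.linear_independent_extend[OF vec.independent_insertI[OF xB B(2)],
        of "\<lambda>z. if z = x then 1 else 0"] by blast
  have "x \<notin> B" using xB vec.span_base by blast
  then have "\<And>z. z \<in> B \<Longrightarrow> g z = 0" using g(2) by auto
  then have "\<forall>y\<in>S. g y = 0"
    using VP.linear_eq_0_on_span[OF g(1)] B(3) by (meson subsetD)
  moreover have "g = (\<lambda>y. \<Sum>i\<in>UNIV. g (axis i 1) * y $ i)"
  proof
    fix y
    have "g y = g (\<Sum>i\<in>UNIV. (y$i) *s axis i 1)" by (simp add: basis_expansion)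
    also have "\<dots> = (\<Sum>i\<in>UNIV. g (axis i 1) * y $ i)"
      by (simp add: VP.linear_sum[OF g(1)] VP.linear_scale[OF g(1)] mult.commute)
    finally show "g y = (\<Sum>i\<in>UNIV. g (axis i 1) * y $ i)" .
  qed
  then have "g \<in> vpolys" using vpolys_linear_form[of "\<lambda>i. g (axis i 1)"] by simp
  ultimately show ?thesis using g(2) by auto
qed

lemma closed_subvariety_subspace:
  fixes S :: "('k::field^'n::finite) set"
  assumes "vec.subspace S"
  shows "closed_subvariety S"
  unfolding closed_subvariety_def
proof (rule exI[of _ "{f \<in> vpolys. \<forall>y\<in>S. f y = 0}"], intro conjI)
  show "S = {v. \<forall>f\<in>{f \<in> vpolys. \<forall>y\<in>S. f y = 0}. f v = 0}"
    using subspace_separated_by_linear_form[OF assms] by auto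
qed auto

lemma subspace_tangent_space:
  fixes S :: "('k::field_char_0^'n::finite) set"
  assumes "vec.subspace S" "x \<in> S" "w \<in> S"
  shows "w \<in> tangent_space S x"
  unfolding tangent_space_def
proof (intro CollectI ballI impI)
  fix f :: "'k^'n \<Rightarrow> 'k" assume "\<forall>y\<in>S. f y = 0"
  moreover have "x + t *s w \<in> S" for t
    using assms by (simp add: vec.subspace_add vec.subspace_scale)
  ultimately have "\<forall>t. poly 0 t = f (x + t *s w)" by simp
  then have "dderiv f x w = coeff 0 1" by (rule dderiv_eq_coeff)
  then show "dderiv f x w = 0" by simp
qed

lemma G_symmetric_subspace:
  fixes S :: "('k::field_char_0^'n::finite) set"
  assumes "vec.subspace S" "\<And>\<xi> x. equivariant_poly_map G \<rho> \<xi> \<Longrightarrow> x \<in> S \<Longrightarrow> \<xi> x \<in> S"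
  shows "G_symmetric G \<rho> S"
  unfolding G_symmetric_def
  using closed_subvariety_subspace[OF assms(1)] subspace_tangent_space[OF assms(1)] assms(2) by blast

lemma subspace_fixed_points: "vec.subspace (fixed_points \<rho> H)"
  unfolding vec.subspace_def
proof (intro conjI ballI allI)
  show "0 \<in> fixed_points \<rho> H" by (simp add: fixed_points_def)
  show "a + b \<in> fixed_points \<rho> H" if "a \<in> fixed_points \<rho> H" "b \<in> fixed_points \<rho> H" for a b
    using that by (simp add: fixed_points_def matrix_vector_right_distrib)
  show "c *s a \<in> fixed_points \<rho> H" if "a \<in> fixed_points \<rho> H" for c a
    using that by (simp add: fixed_points_def vector_scalar_commute)
qed

lemma G_symmetric_fixed_points:
  fixes G :: "('k::field_char_0 ^ 'm ^ 'm) set"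
  assumes "H \<subseteq> G"
  shows "G_symmetric G \<rho> (fixed_points \<rho> H)"
proof (rule G_symmetric_subspace[OF subspace_fixed_points])
  fix \<xi> x assume \<xi>: "equivariant_poly_map G \<rho> \<xi>" and x: "x \<in> fixed_points \<rho> H"
  show "\<xi> x \<in> fixed_points \<rho> H" unfolding fixed_points_def
  proof (intro CollectI ballI)
    fix h assume "h \<in> H"
    then have "\<xi> (\<rho> h *v x) = \<rho> h *v \<xi> x" using \<xi> assms by (auto simp: equivariant_poly_map_def)
    then show "\<rho> h *v \<xi> x = \<xi> x" using x \<open>h \<in> H\<close> by (simp add: fixed_points_def)
  qed
qed

lemma subspace_EndG_orbit: "vec.subspace (EndG_orbit G \<rho> v)"
  unfolding vec.subspace_def EndG_orbit_def
proof (intro conjI ballI allI)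
  show "0 \<in> {\<phi> v |\<phi>. equivariant_poly_map G \<rho> \<phi>}" using equivariant_zero by fastforce
next
  fix a b assume "a \<in> {\<phi> v |\<phi>. equivariant_poly_map G \<rho> \<phi>}" "b \<in> {\<phi> v |\<phi>. equivariant_poly_map G \<rho> \<phi>}"
  then show "a + b \<in> {\<phi> v |\<phi>. equivariant_poly_map G \<rho> \<phi>}" using equivariant_add by fastforce
next
  fix c a assume "a \<in> {\<phi> v |\<phi>. equivariant_poly_map G \<rho> \<phi>}"
  then show "c *s a \<in> {\<phi> v |\<phi>. equivariant_poly_map G \<rho> \<phi>}" using equivariant_scale by fastforce
qed

lemma G_symmetric_EndG_orbit:
  fixes G :: "('k::field_char_0 ^ 'm ^ 'm) set"
  shows "G_symmetric G \<rho> (EndG_orbit G \<rho> v)"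
proof (rule G_symmetric_subspace[OF subspace_EndG_orbit])
  fix \<xi> x assume "equivariant_poly_map G \<rho> \<xi>" "x \<in> EndG_orbit G \<rho> v"
  then show "\<xi> x \<in> EndG_orbit G \<rho> v"
    unfolding EndG_orbit_def using equivariant_comp by fastforce
qed

lemma Msym_eq_EndG_orbit:
  fixes G :: "('k::field_char_0 ^ 'm ^ 'm) set"
  shows "Msym G \<rho> v = EndG_orbit G \<rho> v"
proof
  have "v \<in> EndG_orbit G \<rho> v" using equivariant_id by (fastforce simp: EndG_orbit_def)
  then show "Msym G \<rho> v \<subseteq> EndG_orbit G \<rho> v"
    unfolding Msym_def using G_symmetric_EndG_orbit by blast
  show "EndG_orbit G \<rho> v \<subseteq> Msym G \<rho> v"
    unfolding Msym_def EndG_orbit_def using G_symmetric_equivariant_closed by blast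
qed

lemma EndG_orbit_subset_fixed_points_stabilizer:
  "EndG_orbit G \<rho> v \<subseteq> fixed_points \<rho> (stabilizer G \<rho> v)"
proof
  fix w assume "w \<in> EndG_orbit G \<rho> v"
  then obtain \<phi> where w: "w = \<phi> v" and \<phi>: "equivariant_poly_map G \<rho> \<phi>"
    by (auto simp: EndG_orbit_def)
  have "\<rho> h *v \<phi> v = \<phi> v" if "h \<in> G" "\<rho> h *v v = v" for h
    using \<phi> that unfolding equivariant_poly_map_def by metis
  then show "w \<in> fixed_points \<rho> (stabilizer G \<rho> v)"
    by (simp add: w fixed_points_def stabilizer_def)
qed

theorem proposition4p3p2:
  fixes G :: "('k::field_char_0 ^ 'm ^ 'm) set"
    and \<rho> :: "'k ^ 'm ^ 'm \<Rightarrow> 'k ^ 'n ^ 'n"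
  assumes "alg_closed_field TYPE('k)"
    and "lin_alg_group G"
    and "rational_rep G \<rho>"
  shows "(\<forall>H. closed_subgroup G H \<longrightarrow> G_symmetric G \<rho> (fixed_points \<rho> H))
       \<and> (\<forall>v. Msym G \<rho> v = EndG_orbit G \<rho> v
              \<and> EndG_orbit G \<rho> v \<subseteq> fixed_points \<rho> (stabilizer G \<rho> v))"
proof (intro conjI allI impI)
  fix H assume "closed_subgroup G H"
  then show "G_symmetric G \<rho> (fixed_points \<rho> H)"
    by (simp add: closed_subgroup_def G_symmetric_fixed_points)
next
  fix v
  show "EndG_orbit G \<rho> v \<subseteq> fixed_points \<rho> (stabilizer G \<rho> v)"
    by (rule EndG_orbit_subset_fixed_points_stabilizer)
qed (rule Msym_eq_EndG_orbit)

end
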